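(* Let $G$ be a finite undirected graph (loops allowed). Then the barycentric subdivision ${\rm Bd}(\mathcal N(G))$ collapses (by a finite sequence of elementary collapses) onto its subcomplex $\mathcal{L}o(G)$. In particular, $\mathcal N(G)$ and $\mathcal{L}o(G)$ have the same simple homotopy type.
   Context: For a vertex $v$ of $G$, $N(v)$ is the set of neighbors of $v$; for $S\subseteq V(G)$, $N(S)=\bigcap_{v\in S}N(v)$ is the set of common neighbors of the vertices of $S$. The neighborhood complex $\mathcal N(G)$ is the simplicial complex whose vertices are the non-isolated vertices of $G$ and whose simplices are the nonempty subsets $S\subseteq V(G)$ with $N(S)\neq\emptyset$. $\mathcal F(X)$ denotes the face poset of a complex $X$ (nonempty faces ordered by inclusion), ${\rm Bd}(X)=\Delta(\mathcal F(X))$ the barycentric subdivision, and $\Delta(Q)$ the order complex of a poset $Q$ (simplices are the nonempty chains of $Q$). The Lovász complex is $\mathcal{L}o(G)=\Delta(N(\mathcal F(\mathcal N(G))))$, the order complex of the subposet $\{N(S): S\in\mathcal F(\mathcal N(G))\}\subseteq \mathcal F(\mathcal N(G))$ ordered by inclusion; it is a subcomplex of ${\rm Bd}(\mathcal N(G))$. Two complexes have the same simple homotopy type if they are connected by a finite sequence of elementary collapses and elementary expansions. *)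

theory Defs
  imports Main
begin

definition finite_graph :: "'a set \<Rightarrow> ('a \<Rightarrow> 'a \<Rightarrow> bool) \<Rightarrow> bool" where
  "finite_graph V E \<longleftrightarrow> finite V \<and> (\<forall>u v. E u v \<longrightarrow> u \<in> V \<and> v \<in> V) \<and> (\<forall>u v. E u v \<longrightarrow> E v u)"

definition common_nbhd :: "'a set \<Rightarrow> ('a \<Rightarrow> 'a \<Rightarrow> bool) \<Rightarrow> 'a set \<Rightarrow> 'a set" where
  "common_nbhd V E S = {u \<in> V. \<forall>v\<in>S. E v u}"

text \<open>Abstract simplicial complexes are represented by their sets of nonempty faces.\<close>
definition simplicial_complex :: "'a set set \<Rightarrow> bool" where
  "simplicial_complex K \<longleftrightarrow> finite K \<and>
     (\<forall>\<sigma>\<in>K. finite \<sigma> \<and> \<sigma> \<noteq> {} \<and> (\<forall>\<tau>. \<tau> \<noteq> {} \<and> \<tau> \<subseteq> \<sigma> \<longrightarrow> \<tau> \<in> K))"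

definition neighborhood_complex :: "'a set \<Rightarrow> ('a \<Rightarrow> 'a \<Rightarrow> bool) \<Rightarrow> 'a set set" where
  "neighborhood_complex V E = {S. S \<noteq> {} \<and> S \<subseteq> V \<and> common_nbhd V E S \<noteq> {}}"

definition order_complex :: "'a set set \<Rightarrow> 'a set set set" where
  "order_complex P = {c. c \<noteq> {} \<and> finite c \<and> c \<subseteq> P \<and> (\<forall>x\<in>c. \<forall>y\<in>c. x \<subseteq> y \<or> y \<subseteq> x)}"

text \<open>Face poset of a complex = its set of nonempty faces ordered by inclusion;
barycentric subdivision Bd(X) = order complex of the face poset.\<close>
definition face_poset :: "'a set set \<Rightarrow> 'a set set" where
  "face_poset X = X"

definition barycentric_subdivision :: "'a set set \<Rightarrow> 'a set set set" where
  "barycentric_subdivision X = order_complex (face_poset X)"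

definition lovasz_complex :: "'a set \<Rightarrow> ('a \<Rightarrow> 'a \<Rightarrow> bool) \<Rightarrow> 'a set set set" where
  "lovasz_complex V E = order_complex (common_nbhd V E ` face_poset (neighborhood_complex V E))"

definition elementary_collapse :: "'a set set \<Rightarrow> 'a set set \<Rightarrow> bool" where
  "elementary_collapse K L \<longleftrightarrow> simplicial_complex K \<and>
     (\<exists>\<sigma> \<tau>. \<sigma> \<in> K \<and> \<tau> \<in> K \<and> \<tau> \<subset> \<sigma> \<and> card \<sigma> = Suc (card \<tau>) \<and>
        (\<forall>\<rho>\<in>K. \<tau> \<subseteq> \<rho> \<longrightarrow> \<rho> = \<tau> \<or> \<rho> = \<sigma>) \<and> L = K - {\<sigma>, \<tau>})"

definition collapses :: "'a set set \<Rightarrow> 'a set set \<Rightarrow> bool" where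
  "collapses K L \<longleftrightarrow> (elementary_collapse)\<^sup>*\<^sup>* K L"

text \<open>Same simple homotopy type (up to relabelling of vertices): after injectively
relabelling the vertices of both complexes by natural numbers, the complexes are
connected by a finite sequence of elementary collapses and expansions.\<close>
definition simple_homotopy_equivalent :: "'a set set \<Rightarrow> 'b set set \<Rightarrow> bool" where
  "simple_homotopy_equivalent K L \<longleftrightarrow>
     (\<exists>(f :: 'a \<Rightarrow> nat) (g :: 'b \<Rightarrow> nat). inj_on f (\<Union>K) \<and> inj_on g (\<Union>L) \<and>
        (\<lambda>A B. elementary_collapse A B \<or> elementary_collapse B A)\<^sup>*\<^sup>* ((`) f ` K) ((`) g ` L))"

end

theory Submission
  imports Defs "HOL-Library.Product_Lexorder"
begin

text \<open>
  A chain of faces of \<open>\<N>(G)\<close> lies in \<open>Lo(G)\<close> iff all its elements are closed, i.e. of the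
  form \<open>N(T)\<close>. For any other chain let \<open>x\<close> be its largest non-closed element; the closure
  \<open>N(N(x))\<close> is comparable with every element of the chain, so adding or removing it pairs up
  all chains outside \<open>Lo(G)\<close>. The partner vertex depends only on \<open>x\<close>, which can only grow
  along a face relation between pairs, so the matching is acyclic and its pairs can be collapsed
  one at a time, starting from a pair of maximal rank.

  For the simple homotopy type, the complex whose faces are \<open>A \<union> C\<close>, with \<open>C\<close> a chain of faces
  of \<open>K\<close> all containing the face \<open>A\<close>, collapses onto \<open>K\<close> (toggle a fixed vertex of the least
  element of \<open>C\<close>) and onto \<open>Bd(K)\<close> (toggle \<open>A\<close> as an element of the chain) by matchings of
  the same kind.
\<close>

lemma barycentric_subdivision_eq: "barycentric_subdivision X = order_complex X"
  by (simp add: barycentric_subdivision_def face_poset_def)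

lemma order_complex_iff: "c \<in> order_complex P \<longleftrightarrow> c \<noteq> {} \<and> finite c \<and> subset.chain P c"
  by (auto simp: order_complex_def subset_chain_def)

lemma insert_in_order_complex:
  assumes "A \<in> P" and "finite c" and "subset.chain P c" and "\<And>y. y \<in> c \<Longrightarrow> y \<subseteq> A \<or> A \<subseteq> y"
  shows "insert A c \<in> order_complex P"
  using assms by (simp add: order_complex_iff subset_chain_insert)

lemma simplicial_complexI:
  assumes "finite K" and "\<And>\<sigma>. \<sigma> \<in> K \<Longrightarrow> finite \<sigma> \<and> \<sigma> \<noteq> {}"
    and "\<And>\<sigma> \<tau>. \<sigma> \<in> K \<Longrightarrow> \<tau> \<noteq> {} \<Longrightarrow> \<tau> \<subseteq> \<sigma> \<Longrightarrow> \<tau> \<in> K"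
  shows "simplicial_complex K"
  using assms unfolding simplicial_complex_def by blast

lemma simplicial_complex_finite: "simplicial_complex K \<Longrightarrow> finite K"
  unfolding simplicial_complex_def by blast

lemma simplicial_complex_faceD: "simplicial_complex K \<Longrightarrow> \<sigma> \<in> K \<Longrightarrow> finite \<sigma> \<and> \<sigma> \<noteq> {}"
  unfolding simplicial_complex_def by blast

lemma simplicial_complex_downward_closed:
  "simplicial_complex K \<Longrightarrow> \<sigma> \<in> K \<Longrightarrow> \<tau> \<noteq> {} \<Longrightarrow> \<tau> \<subseteq> \<sigma> \<Longrightarrow> \<tau> \<in> K"
  unfolding simplicial_complex_def by blast

lemma simplicial_complex_finite_Union: "simplicial_complex K \<Longrightarrow> finite (\<Union>K)"
  using simplicial_complex_finite simplicial_complex_faceD by blast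

lemma simplicial_complex_order_complex:
  assumes "finite P"
  shows "simplicial_complex (order_complex P)"
proof (rule simplicial_complexI)
  have "order_complex P \<subseteq> Pow P"
    unfolding order_complex_def by auto
  then show "finite (order_complex P)"
    using assms by (meson finite_Pow_iff finite_subset)
qed (auto simp: order_complex_def finite_subset subset_iff)

lemma simplicial_complex_image:
  assumes K: "simplicial_complex K"
  shows "simplicial_complex ((`) h ` K)"
proof (rule simplicial_complexI)
  show "finite ((`) h ` K)"
    using simplicial_complex_finite[OF K] by simp
  show "finite \<sigma> \<and> \<sigma> \<noteq> {}" if "\<sigma> \<in> (`) h ` K" for \<sigma>
    using that simplicial_complex_faceD[OF K] by blast
next
  fix \<sigma> \<tau> assume "\<sigma> \<in> (`) h ` K" and \<tau>: "\<tau> \<noteq> {}" "\<tau> \<subseteq> \<sigma>"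
  then obtain \<sigma>0 where \<sigma>0: "\<sigma>0 \<in> K" "\<sigma> = h ` \<sigma>0" by auto
  define \<tau>0 where "\<tau>0 = \<sigma>0 \<inter> h -` \<tau>"
  have "\<tau> = h ` \<tau>0" and "\<tau>0 \<noteq> {}"
    using \<tau> \<sigma>0 by (auto simp: \<tau>0_def)
  moreover have "\<tau>0 \<in> K"
    using simplicial_complex_downward_closed[OF K \<sigma>0(1) \<open>\<tau>0 \<noteq> {}\<close>] by (simp add: \<tau>0_def)
  ultimately show "\<tau> \<in> (`) h ` K" by blast
qed

lemma elementary_collapseE:
  assumes "elementary_collapse K L"
  obtains \<sigma> \<tau> where "simplicial_complex K" "\<sigma> \<in> K" "\<tau> \<in> K" "\<tau> \<subset> \<sigma>"
    "card \<sigma> = Suc (card \<tau>)" "\<And>\<rho>. \<rho> \<in> K \<Longrightarrow> \<tau> \<subseteq> \<rho> \<Longrightarrow> \<rho> = \<tau> \<or> \<rho> = \<sigma>" "L = K - {\<sigma>, \<tau>}"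
  using assms unfolding elementary_collapse_def by blast

lemma elementary_collapseI:
  assumes "simplicial_complex K" "\<sigma> \<in> K" "\<tau> \<in> K" "\<tau> \<subset> \<sigma>" "card \<sigma> = Suc (card \<tau>)"
    "\<And>\<rho>. \<rho> \<in> K \<Longrightarrow> \<tau> \<subseteq> \<rho> \<Longrightarrow> \<rho> = \<tau> \<or> \<rho> = \<sigma>"
  shows "elementary_collapse K (K - {\<sigma>, \<tau>})"
  using assms unfolding elementary_collapse_def by blast

lemma simplicial_complex_elementary_collapse:
  assumes "elementary_collapse K L"
  shows "simplicial_complex L"
proof -
  obtain \<sigma> \<tau> where K: "simplicial_complex K" and "\<tau> \<subset> \<sigma>"
    and free: "\<And>\<rho>. \<rho> \<in> K \<Longrightarrow> \<tau> \<subseteq> \<rho> \<Longrightarrow> \<rho> = \<tau> \<or> \<rho> = \<sigma>" and L: "L = K - {\<sigma>, \<tau>}"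
    using assms by (elim elementary_collapseE) blast
  show ?thesis
  proof (rule simplicial_complexI)
    show "finite L" "\<And>\<rho>. \<rho> \<in> L \<Longrightarrow> finite \<rho> \<and> \<rho> \<noteq> {}"
      using simplicial_complex_finite[OF K] simplicial_complex_faceD[OF K] by (auto simp: L)
  next
    fix \<rho> \<rho>' assume "\<rho> \<in> L" "\<rho>' \<noteq> {}" "\<rho>' \<subseteq> \<rho>"
    moreover have "\<rho>' \<noteq> \<tau>" "\<rho>' \<noteq> \<sigma>"
      using calculation free \<open>\<tau> \<subset> \<sigma>\<close> by (auto simp: L)
    ultimately show "\<rho>' \<in> L"
      using simplicial_complex_downward_closed[OF K] by (auto simp: L)
  qed
qed

lemma collapses_trans: "collapses K L \<Longrightarrow> collapses L M \<Longrightarrow> collapses K M"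
  unfolding collapses_def by (rule rtranclp_trans)

lemma collapses_subset: "collapses K L \<Longrightarrow> L \<subseteq> K"
  unfolding collapses_def
  by (induction rule: rtranclp_induct) (auto elim: elementary_collapseE)

lemma elementary_collapse_image:
  assumes "elementary_collapse K L" and inj: "inj_on h (\<Union>K)"
  shows "elementary_collapse ((`) h ` K) ((`) h ` L)"
proof -
  obtain \<sigma> \<tau> where K: "simplicial_complex K" and \<sigma>: "\<sigma> \<in> K" and \<tau>: "\<tau> \<in> K"
    and "\<tau> \<subset> \<sigma>" and card: "card \<sigma> = Suc (card \<tau>)"
    and free: "\<And>\<rho>. \<rho> \<in> K \<Longrightarrow> \<tau> \<subseteq> \<rho> \<Longrightarrow> \<rho> = \<tau> \<or> \<rho> = \<sigma>" and L: "L = K - {\<sigma>, \<tau>}"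
    using assms(1) by (elim elementary_collapseE) blast
  have inj_faces: "inj_on ((`) h) K"
    using inj by (rule inj_on_image)
  have inj_face: "inj_on h \<rho>" if "\<rho> \<in> K" for \<rho>
    using inj that by (blast intro: inj_on_subset)
  have "card (h ` \<sigma>) = Suc (card (h ` \<tau>))"
    using card by (simp add: card_image inj_face \<sigma> \<tau>)
  moreover have "h ` \<tau> \<subset> h ` \<sigma>"
    using \<open>\<tau> \<subset> \<sigma>\<close> calculation by (auto intro: image_mono)
  moreover have "\<rho> = h ` \<tau> \<or> \<rho> = h ` \<sigma>" if \<rho>: "\<rho> \<in> (`) h ` K" and sub: "h ` \<tau> \<subseteq> \<rho>" for \<rho>
  proof -
    obtain \<rho>0 where \<rho>0: "\<rho>0 \<in> K" "\<rho> = h ` \<rho>0"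
      using \<rho> by blast
    have "inj_on h (\<tau> \<union> \<rho>0)"
      using inj \<rho>0(1) \<tau> by (blast intro: inj_on_subset)
    then have "\<tau> \<subseteq> \<rho>0"
      using sub \<rho>0(2) unfolding inj_on_def by blast
    then show ?thesis
      using free \<rho>0 by blast
  qed
  moreover have "(`) h ` L = (`) h ` K - {h ` \<sigma>, h ` \<tau>}"
    unfolding L using inj_on_image_set_diff[OF inj_faces, of K "{\<sigma>, \<tau>}"] \<sigma> \<tau> by simp
  ultimately show ?thesis
    using elementary_collapseI[OF simplicial_complex_image[OF K]] \<sigma> \<tau> by (metis imageI)
qed

lemma collapses_image:
  assumes "collapses K L" and "inj_on h (\<Union>K)"
  shows "collapses ((`) h ` K) ((`) h ` L)"
  using assms(1) unfolding collapses_def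
proof (induction rule: rtranclp_induct)
  case (step L M)
  then have "inj_on h (\<Union>L)"
    using collapses_subset[unfolded collapses_def] assms(2) by (blast intro: inj_on_subset)
  then show ?case
    using step elementary_collapse_image by (blast intro: rtranclp.rtrancl_into_rtrancl)
qed simp

lemma collapses_acyclic_matching:
  fixes p :: "'x set \<Rightarrow> 'x set" and r :: "'x set \<Rightarrow> 'b::linorder"
  assumes "simplicial_complex K" and "U \<subseteq> K"
    and "\<And>\<tau>. \<tau> \<in> U \<Longrightarrow> p \<tau> \<in> K \<and> \<tau> \<subset> p \<tau> \<and> card (p \<tau>) = Suc (card \<tau>) \<and> p \<tau> \<notin> U"
    and "inj_on p U"
    and "\<And>\<rho> \<rho>'. \<rho> \<in> U \<union> p ` U \<Longrightarrow> \<rho>' \<in> K \<Longrightarrow> \<rho> \<subseteq> \<rho>' \<Longrightarrow> \<rho>' \<in> U \<union> p ` U"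
    and "\<And>\<tau> \<tau>'. \<tau> \<in> U \<Longrightarrow> \<tau>' \<in> U \<Longrightarrow> \<tau> \<subset> \<tau>' \<or> (\<tau> \<subset> p \<tau>' \<and> \<tau> \<noteq> \<tau>') \<Longrightarrow> r \<tau> < r \<tau>'"
  shows "collapses K (K - (U \<union> p ` U))"
  using assms
proof (induction "card U" arbitrary: K U rule: less_induct)
  case less
  note K = less.prems(1) and UK = less.prems(2) and p = less.prems(3) and inj = less.prems(4)
    and up = less.prems(5) and rank = less.prems(6)
  have "finite U"
    using simplicial_complex_finite[OF K] UK by (rule rev_finite_subset)
  show ?case
  proof (cases "U = {}")
    case True
    then show ?thesis by (simp add: collapses_def)
  next
    case False
    text \<open>A pair whose lower face has maximal rank is free: a larger face would be matched
      with a face of higher rank.\<close>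
    have "Max (r ` U) \<in> r ` U"
      using \<open>finite U\<close> False by simp
    then obtain \<tau> where \<tau>: "\<tau> \<in> U" and "r \<tau> = Max (r ` U)"
      by (metis imageE)
    then have max: "r \<tau>' \<le> r \<tau>" if "\<tau>' \<in> U" for \<tau>'
      using \<open>finite U\<close> that by simp
    define \<sigma> where "\<sigma> = p \<tau>"
    define K' where "K' = K - {\<sigma>, \<tau>}"
    define U' where "U' = U - {\<tau>}"
    have free: "\<rho> = \<tau> \<or> \<rho> = \<sigma>" if "\<rho> \<in> K" "\<tau> \<subseteq> \<rho>" for \<rho>
    proof (rule ccontr)
      assume other: "\<not> (\<rho> = \<tau> \<or> \<rho> = \<sigma>)"
      have "\<rho> \<in> U \<union> p ` U"
        using up \<tau> that by blast
      then obtain \<tau>' where "\<tau>' \<in> U" and "r \<tau> < r \<tau>'"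
      proof
        assume "\<rho> \<in> U"
        moreover have "\<tau> \<subset> \<rho>"
          using \<open>\<tau> \<subseteq> \<rho>\<close> other by blast
        ultimately show thesis
          using that rank[OF \<tau>] by blast
      next
        assume "\<rho> \<in> p ` U"
        then obtain \<tau>' where "\<tau>' \<in> U" and \<rho>: "\<rho> = p \<tau>'"
          by blast
        moreover have "\<tau> \<subset> p \<tau>' \<and> \<tau> \<noteq> \<tau>'"
          using \<open>\<tau> \<subseteq> \<rho>\<close> other \<rho> by (auto simp: \<sigma>_def)
        ultimately show thesis
          using that rank[OF \<tau>] by blast
      qed
      then show False
        using max leD by blast
    qed
    have collapse: "elementary_collapse K K'"
      unfolding K'_def using UK p[OF \<tau>] \<tau> free
      by (intro elementary_collapseI[OF K]) (auto simp: \<sigma>_def)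
    have "collapses K' (K' - (U' \<union> p ` U'))"
    proof (rule less.hyps)
      show "card U' < card U"
        unfolding U'_def using \<open>finite U\<close> \<tau> by (rule card_Diff1_less)
      show "simplicial_complex K'"
        using collapse by (rule simplicial_complex_elementary_collapse)
      show "U' \<subseteq> K'"
        using UK p[OF \<tau>] by (auto simp: U'_def K'_def \<sigma>_def)
      show "p t \<in> K' \<and> t \<subset> p t \<and> card (p t) = Suc (card t) \<and> p t \<notin> U'" if "t \<in> U'" for t
        using that p \<tau> inj by (auto simp: U'_def K'_def \<sigma>_def dest: inj_onD)
      show "inj_on p U'"
        using inj by (auto simp: U'_def intro: inj_on_subset)
      show "\<rho>' \<in> U' \<union> p ` U'" if "\<rho> \<in> U' \<union> p ` U'" "\<rho>' \<in> K'" "\<rho> \<subseteq> \<rho>'" for \<rho> \<rho>'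
        using that up[of \<rho> \<rho>'] by (auto simp: U'_def K'_def \<sigma>_def)
      show "r t < r t'" if "t \<in> U'" "t' \<in> U'" "t \<subset> t' \<or> (t \<subset> p t' \<and> t \<noteq> t')" for t t'
        using that rank by (simp add: U'_def)
    qed
    moreover have "K' - (U' \<union> p ` U') = K - (U \<union> p ` U)"
      using \<tau> by (auto simp: K'_def U'_def \<sigma>_def)
    ultimately show ?thesis
      using collapse unfolding collapses_def by (simp add: converse_rtranclp_into_rtranclp)
  qed
qed

text \<open>Each face \<open>X \<in> R\<close> is paired with \<open>X\<close> plus or minus the vertex \<open>v (key X)\<close>; toggling it
  does not change \<open>key X\<close>, and ranking by \<open>(card (key X), card X)\<close> makes the pairing acyclic.\<close>

lemma collapses_vertex_matching:
  fixes key :: "'x set \<Rightarrow> 'k set" and v :: "'k set \<Rightarrow> 'x"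
  assumes K: "simplicial_complex K" and "R \<subseteq> K"
    and up: "\<And>X Y. X \<in> R \<Longrightarrow> Y \<in> K \<Longrightarrow> X \<subseteq> Y \<Longrightarrow> Y \<in> R"
    and key_mono: "\<And>X Y. X \<subseteq> Y \<Longrightarrow> key X \<subseteq> key Y"
    and key_finite: "\<And>X. X \<in> R \<Longrightarrow> finite (key X)"
    and insert: "\<And>X. X \<in> R \<Longrightarrow> insert (v (key X)) X \<in> K \<and> key (insert (v (key X)) X) = key X"
    and remove: "\<And>X. X \<in> R \<Longrightarrow> v (key X) \<in> X \<Longrightarrow> X - {v (key X)} \<in> R \<and> key (X - {v (key X)}) = key X"
  shows "collapses K (K - R)"
proof -
  define U where "U = {X \<in> R. v (key X) \<notin> X}"
  define p where "p X = insert (v (key X)) X" for X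
  have key_p: "key (p X) = key X" and p_in_R: "p X \<in> R" if "X \<in> R" for X
    using insert[OF that] up[OF that] by (auto simp: p_def)
  have finite_face: "finite X" if "X \<in> R" for X
    using that \<open>R \<subseteq> K\<close> simplicial_complex_faceD[OF K] by blast
  have matched: "U \<union> p ` U = R"
  proof
    show "U \<union> p ` U \<subseteq> R"
      using p_in_R by (auto simp: U_def)
    show "R \<subseteq> U \<union> p ` U"
    proof
      fix X assume X: "X \<in> R"
      show "X \<in> U \<union> p ` U"
      proof (cases "v (key X) \<in> X")
        case True
        then have "X - {v (key X)} \<in> U" and "X = p (X - {v (key X)})"
          using remove[OF X] by (auto simp: U_def p_def)
        then show ?thesis by blast
      qed (use X in \<open>simp add: U_def\<close>)
    qed
  qed
  have "collapses K (K - (U \<union> p ` U))"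
  proof (rule collapses_acyclic_matching[where r = "\<lambda>X. (card (key X), card X)"])
    show "simplicial_complex K" by (rule K)
    show "U \<subseteq> K"
      using \<open>R \<subseteq> K\<close> by (auto simp: U_def)
    show "p \<tau> \<in> K \<and> \<tau> \<subset> p \<tau> \<and> card (p \<tau>) = Suc (card \<tau>) \<and> p \<tau> \<notin> U" if "\<tau> \<in> U" for \<tau>
    proof -
      have \<tau>: "\<tau> \<in> R" "v (key \<tau>) \<notin> \<tau>"
        using that by (simp_all add: U_def)
      then have "p \<tau> \<notin> U"
        using key_p[of \<tau>] by (simp add: U_def p_def)
      then show ?thesis
        using \<tau> insert[of \<tau>] finite_face[of \<tau>] by (auto simp: p_def)
    qed
    show "inj_on p U"
    proof (rule inj_onI)
      fix X Y assume X: "X \<in> U" and Y: "Y \<in> U" and eq: "p X = p Y"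
      have "key X = key Y"
        using key_p[of X] key_p[of Y] X Y eq by (simp add: U_def)
      have "X = p X - {v (key X)}" "Y = p Y - {v (key Y)}"
        using X Y by (auto simp: U_def p_def)
      then show "X = Y"
        using eq \<open>key X = key Y\<close> by simp
    qed
    show "\<rho>' \<in> U \<union> p ` U" if "\<rho> \<in> U \<union> p ` U" "\<rho>' \<in> K" "\<rho> \<subseteq> \<rho>'" for \<rho> \<rho>'
      using that up unfolding matched by blast
  next
    fix \<tau> \<tau>' assume \<tau>: "\<tau> \<in> U" and \<tau>': "\<tau>' \<in> U" and "\<tau> \<subset> \<tau>' \<or> (\<tau> \<subset> p \<tau>' \<and> \<tau> \<noteq> \<tau>')"
    then have "\<tau> \<subseteq> p \<tau>'"
      by (auto simp: p_def)
    then have key_le: "key \<tau> \<subseteq> key \<tau>'"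
      using key_mono[OF \<open>\<tau> \<subseteq> p \<tau>'\<close>] key_p[of \<tau>'] \<tau>' by (simp add: U_def)
    show "(card (key \<tau>), card \<tau>) < (card (key \<tau>'), card \<tau>')"
    proof (cases "key \<tau> = key \<tau>'")
      case True
      text \<open>Equal keys mean the same vertex is missing from both, so \<open>\<tau> \<subset> \<tau>'\<close>.\<close>
      have "v (key \<tau>') \<notin> \<tau>"
        using \<tau> True by (simp add: U_def)
      then have "\<tau> \<subset> \<tau>'"
        using \<open>\<tau> \<subset> \<tau>' \<or> _\<close> by (auto simp: p_def)
      then show ?thesis
        using True finite_face \<tau>' by (simp add: U_def psubset_card_mono)
    next
      case False
      then show ?thesis
        using key_le key_finite \<tau>' by (simp add: U_def psubset_card_mono)
    qed
  qed
  then show ?thesis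
    unfolding matched .
qed

lemma simple_homotopy_equivalent_iff:
  "simple_homotopy_equivalent K L \<longleftrightarrow>
     (\<exists>(f :: 'a \<Rightarrow> nat) (g :: 'b \<Rightarrow> nat). inj_on f (\<Union>K) \<and> inj_on g (\<Union>L) \<and>
        equivclp elementary_collapse ((`) f ` K) ((`) g ` L))"
  unfolding simple_homotopy_equivalent_def equivclp_def symclp_def ..

lemma simple_homotopy_equivalent_if_common_collapse:
  fixes i :: "'a \<Rightarrow> 'c" and j :: "'b \<Rightarrow> 'c"
  assumes M: "simplicial_complex M" and "inj i" "inj j"
    and K_collapse: "collapses M ((`) i ` K)" and L_collapse: "collapses M ((`) j ` L)"
  shows "simple_homotopy_equivalent K L"
proof -
  obtain h :: "'c \<Rightarrow> nat" where h: "inj_on h (\<Union>M)"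
    using finite_imp_inj_to_nat_seg[OF simplicial_complex_finite_Union[OF M]] by blast
  have "i ` \<Union>K \<subseteq> \<Union>M" "j ` \<Union>L \<subseteq> \<Union>M"
    using collapses_subset[OF K_collapse] collapses_subset[OF L_collapse] by blast+
  then have "inj_on (h \<circ> i) (\<Union>K)" "inj_on (h \<circ> j) (\<Union>L)"
    using \<open>inj i\<close> \<open>inj j\<close> inj_on_subset[OF h] by (metis comp_inj_on inj_on_subset subset_UNIV)+
  moreover have "equivclp elementary_collapse ((`) (h \<circ> i) ` K) ((`) (h \<circ> j) ` L)"
  proof -
    have "collapses ((`) h ` M) ((`) (h \<circ> i) ` K)" "collapses ((`) h ` M) ((`) (h \<circ> j) ` L)"
      using collapses_image[OF K_collapse h] collapses_image[OF L_collapse h] by (simp_all add: image_comp)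
    then show ?thesis
      unfolding collapses_def
      by (metis equivclp_trans rtranclp_into_equivclp converse_rtranclp_into_equivclp)
  qed
  ultimately show ?thesis
    unfolding simple_homotopy_equivalent_iff by blast
qed

text \<open>Faces are \<open>A \<union> C\<close> (as \<open>Inl ` A \<union> Inr ` C\<close>) with \<open>C\<close> a face of \<open>Bd(K)\<close> and
  \<open>A \<subseteq> \<Inter>C\<close>, or \<open>C = {}\<close> and \<open>A \<in> K\<close>; it contains copies of \<open>K\<close> and of \<open>Bd(K)\<close>.\<close>

definition subdivision_cylinder :: "'a set set \<Rightarrow> ('a + 'a set) set set" where
  "subdivision_cylinder K =
     {X. (Inr -` X = {} \<and> Inl -` X \<in> K) \<or> (Inr -` X \<in> order_complex K \<and> Inl -` X \<subseteq> \<Inter>(Inr -` X))}"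

lemma Inl_vimage_Un_Inr_vimage: "Inl ` (Inl -` X) \<union> Inr ` (Inr -` X) = X"
proof (rule set_eqI)
  show "x \<in> Inl ` (Inl -` X) \<union> Inr ` (Inr -` X) \<longleftrightarrow> x \<in> X" for x
    by (cases x) auto
qed

lemma Inl_Inr_vimage_empty_iff: "Inl -` X = {} \<and> Inr -` X = {} \<longleftrightarrow> X = {}"
  by (metis Inl_vimage_Un_Inr_vimage image_empty sup_bot.right_neutral vimage_empty)

lemma vimage_Inl_Inr_insert_Diff [simp]:
  "Inl -` insert (Inr b) X = Inl -` X" "Inr -` insert (Inr b) X = insert b (Inr -` X)"
  "Inl -` insert (Inl a) X = insert a (Inl -` X)" "Inr -` insert (Inl a) X = Inr -` X"
  "Inl -` (X - {Inr b}) = Inl -` X" "Inr -` (X - {Inr b}) = Inr -` X - {b}"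
  "Inl -` (X - {Inl a}) = Inl -` X - {a}" "Inr -` (X - {Inl a}) = Inr -` X"
  by auto

lemma vimage_Inl_Inr_image [simp]:
  "Inl -` Inl ` A = A" "Inr -` Inl ` A = {}" "Inr -` Inr ` B = B" "Inl -` Inr ` B = {}"
  by auto

context
  fixes K :: "'a set set"
  assumes K: "simplicial_complex K"
begin

lemma subdivision_cylinder_Inl_vimage:
  assumes "X \<in> subdivision_cylinder K" and "Inl -` X \<noteq> {}"
  shows "Inl -` X \<in> K"
proof (cases "Inr -` X = {}")
  case False
  then have "Inr -` X \<in> order_complex K" and A: "Inl -` X \<subseteq> \<Inter>(Inr -` X)"
    using assms(1) by (auto simp: subdivision_cylinder_def)
  then obtain c where "c \<in> Inr -` X" "c \<in> K"
    unfolding order_complex_def by blast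
  then show ?thesis
    using A assms(2) simplicial_complex_downward_closed[OF K] by blast
next
  case True
  then show ?thesis
    using assms(1) by (simp add: subdivision_cylinder_def order_complex_def)
qed

lemma subdivision_cylinder_Inr_vimage:
  assumes "X \<in> subdivision_cylinder K" and "Inr -` X \<noteq> {}"
  shows "Inr -` X \<in> order_complex K" and "Inl -` X \<subseteq> \<Inter>(Inr -` X)"
  using assms by (auto simp: subdivision_cylinder_def)

lemma subdivision_cylinder_subset: "subdivision_cylinder K \<subseteq> Pow (Inl ` \<Union>K \<union> Inr ` K)"
proof
  fix X assume X: "X \<in> subdivision_cylinder K"
  have "Inl -` X \<subseteq> \<Union>K"
    using subdivision_cylinder_Inl_vimage[OF X] by blast
  moreover have "Inr -` X \<subseteq> K"
    using subdivision_cylinder_Inr_vimage(1)[OF X] by (auto simp: order_complex_def)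
  ultimately have "Inl ` (Inl -` X) \<union> Inr ` (Inr -` X) \<subseteq> Inl ` \<Union>K \<union> Inr ` K"
    by (intro Un_mono image_mono)
  then show "X \<in> Pow (Inl ` \<Union>K \<union> Inr ` K)"
    by (simp only: Inl_vimage_Un_Inr_vimage Pow_iff)
qed

lemma subdivision_cylinder_faceD:
  assumes X: "X \<in> subdivision_cylinder K"
  shows "finite X \<and> X \<noteq> {}"
proof
  have "{} \<notin> K" "{} \<notin> order_complex K"
    using simplicial_complex_faceD[OF K] by (auto simp: order_complex_def)
  then have "Inl -` X \<noteq> {} \<or> Inr -` X \<noteq> {}"
    using X by (auto simp: subdivision_cylinder_def)
  then show "X \<noteq> {}"
    using Inl_Inr_vimage_empty_iff by blast
  have "finite (Inl -` X)"
    using subdivision_cylinder_Inl_vimage[OF X] simplicial_complex_faceD[OF K]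
    by (cases "Inl -` X = {}") auto
  moreover have "finite (Inr -` X)"
    using subdivision_cylinder_Inr_vimage(1)[OF X] by (cases "Inr -` X = {}") (auto simp: order_complex_def)
  ultimately have "finite (Inl ` (Inl -` X) \<union> Inr ` (Inr -` X))"
    by (intro finite_UnI finite_imageI)
  then show "finite X"
    by (simp only: Inl_vimage_Un_Inr_vimage)
qed

lemma simplicial_complex_subdivision_cylinder: "simplicial_complex (subdivision_cylinder K)"
proof (rule simplicial_complexI)
  show "finite (subdivision_cylinder K)"
  proof (rule finite_subset[OF subdivision_cylinder_subset])
    show "finite (Pow (Inl ` \<Union>K \<union> Inr ` K))"
      using simplicial_complex_finite_Union[OF K] simplicial_complex_finite[OF K] by simp
  qed
  show "finite X \<and> X \<noteq> {}" if "X \<in> subdivision_cylinder K" for X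
    using that by (rule subdivision_cylinder_faceD)
next
  fix X Y assume X: "X \<in> subdivision_cylinder K" and "Y \<noteq> {}" "Y \<subseteq> X"
  then have sub: "Inl -` Y \<subseteq> Inl -` X" "Inr -` Y \<subseteq> Inr -` X"
    by auto
  show "Y \<in> subdivision_cylinder K"
  proof (cases "Inr -` Y = {}")
    case True
    then have "Inl -` Y \<noteq> {}"
      using \<open>Y \<noteq> {}\<close> Inl_Inr_vimage_empty_iff[of Y] by simp
    moreover have "Inl -` X \<noteq> {}"
      using calculation sub(1) by blast
    ultimately have "Inl -` Y \<in> K"
      using simplicial_complex_downward_closed[OF K subdivision_cylinder_Inl_vimage[OF X]] sub(1) by blast
    then show ?thesis
      using True by (simp add: subdivision_cylinder_def)
  next
    case False
    then have "Inr -` X \<noteq> {}"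
      using sub(2) by blast
    note X_chain = subdivision_cylinder_Inr_vimage[OF X this]
    have "Inr -` Y \<in> order_complex K"
      using simplicial_complex_downward_closed[OF simplicial_complex_order_complex X_chain(1) False sub(2)]
        simplicial_complex_finite[OF K] by blast
    moreover have "Inl -` Y \<subseteq> \<Inter>(Inr -` Y)"
      using X_chain(2) sub by blast
    ultimately show ?thesis
      by (simp add: subdivision_cylinder_def)
  qed
qed

lemma subdivision_cylinder_collapses_order_complex:
  "collapses (subdivision_cylinder K) ((`) Inr ` order_complex K)"
proof -
  let ?M = "subdivision_cylinder K"
  define R where "R = {X \<in> ?M. Inl -` X \<noteq> {}}"
  have face: "Inl -` X \<in> K" if "X \<in> R" for X
    using that subdivision_cylinder_Inl_vimage by (simp add: R_def)
  have "collapses ?M (?M - R)"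
  proof (rule collapses_vertex_matching[where key = "(-`) Inl" and v = Inr])
    show "simplicial_complex ?M"
      by (rule simplicial_complex_subdivision_cylinder)
    show "R \<subseteq> ?M" "\<And>X Y. X \<subseteq> Y \<Longrightarrow> Inl -` X \<subseteq> Inl -` Y"
      by (auto simp: R_def)
    show "\<And>X Y. X \<in> R \<Longrightarrow> Y \<in> ?M \<Longrightarrow> X \<subseteq> Y \<Longrightarrow> Y \<in> R"
      by (auto simp: R_def)
    show "finite (Inl -` X)" if "X \<in> R" for X
      using simplicial_complex_faceD[OF K face[OF that]] by blast
  next
    fix X assume X: "X \<in> R"
    have below: "Inl -` X \<subseteq> \<Inter>(Inr -` X)"
      using X subdivision_cylinder_Inr_vimage(2) by (cases "Inr -` X = {}") (auto simp: R_def)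
    have "insert (Inl -` X) (Inr -` X) \<in> order_complex K"
    proof (cases "Inr -` X = {}")
      case False
      then have "Inr -` X \<in> order_complex K"
        using X subdivision_cylinder_Inr_vimage by (simp add: R_def)
      then show ?thesis
        using face[OF X] below by (intro insert_in_order_complex) (auto simp: order_complex_iff)
    qed (use face[OF X] in \<open>simp add: order_complex_def\<close>)
    then show "insert (Inr (Inl -` X)) X \<in> ?M \<and> Inl -` insert (Inr (Inl -` X)) X = Inl -` X"
      using below by (simp add: subdivision_cylinder_def)
    assume "Inr (Inl -` X) \<in> X"
    then have A: "Inl -` X \<in> Inr -` X"
      by simp
    have "X - {Inr (Inl -` X)} \<in> ?M"
    proof (cases "Inr -` X - {Inl -` X} = {}")
      case True
      then show ?thesis
        using face[OF X] by (simp add: subdivision_cylinder_def)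
    next
      case False
      have "Inr -` X \<in> order_complex K"
        using X A subdivision_cylinder_Inr_vimage by (auto simp: R_def)
      moreover have "Inr -` X - {Inl -` X} \<in> order_complex K"
        using simplicial_complex_downward_closed[OF simplicial_complex_order_complex calculation(1) False]
          simplicial_complex_finite[OF K] by blast
      ultimately show ?thesis
        using below by (auto simp: subdivision_cylinder_def)
    qed
    then show "X - {Inr (Inl -` X)} \<in> R \<and> Inl -` (X - {Inr (Inl -` X)}) = Inl -` X"
      using X by (simp add: R_def)
  qed
  moreover have "?M - R = (`) Inr ` order_complex K"
  proof
    show "?M - R \<subseteq> (`) Inr ` order_complex K"
    proof
      fix X assume "X \<in> ?M - R"
      then have X: "X \<in> ?M" and no_Inl: "Inl -` X = {}"
        by (auto simp: R_def)
      then have "Inr -` X \<noteq> {}"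
        using subdivision_cylinder_faceD[OF X] Inl_Inr_vimage_empty_iff[of X] by simp
      then have "Inr -` X \<in> order_complex K"
        by (rule subdivision_cylinder_Inr_vimage(1)[OF X])
      moreover have "X = Inr ` (Inr -` X)"
        using Inl_vimage_Un_Inr_vimage[of X] no_Inl by simp
      ultimately show "X \<in> (`) Inr ` order_complex K"
        by (rule rev_image_eqI)
    qed
    show "(`) Inr ` order_complex K \<subseteq> ?M - R"
      by (auto simp: R_def subdivision_cylinder_def order_complex_def)
  qed
  ultimately show ?thesis
    by simp
qed

lemma subdivision_cylinder_collapses_complex: "collapses (subdivision_cylinder K) ((`) Inl ` K)"
proof -
  let ?M = "subdivision_cylinder K"
  define R where "R = {X \<in> ?M. Inr -` X \<noteq> {}}"
  define v :: "'a set set \<Rightarrow> 'a + 'a set" where "v C = Inl (SOME a. a \<in> \<Inter>C)" for C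
  have chain: "Inr -` X \<in> order_complex K" and below: "Inl -` X \<subseteq> \<Inter>(Inr -` X)" if "X \<in> R" for X
    using that subdivision_cylinder_Inr_vimage by (auto simp: R_def)
  have least: "(SOME a. a \<in> \<Inter>(Inr -` X)) \<in> \<Inter>(Inr -` X)" if "X \<in> R" for X
  proof -
    have "\<Inter>(Inr -` X) \<in> Inr -` X"
      using chain[OF that] Inter_in_chain by (auto simp: order_complex_iff)
    then have "\<Inter>(Inr -` X) \<noteq> {}"
      using chain[OF that] simplicial_complex_faceD[OF K] by (auto simp: order_complex_def)
    then obtain a where "a \<in> \<Inter>(Inr -` X)"
      by blast
    then show ?thesis
      by (rule someI[where P = "\<lambda>a. a \<in> \<Inter>(Inr -` X)"])
  qed
  have "collapses ?M (?M - R)"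
  proof (rule collapses_vertex_matching[where key = "(-`) Inr" and v = v])
    show "simplicial_complex ?M"
      by (rule simplicial_complex_subdivision_cylinder)
    show "R \<subseteq> ?M" "\<And>X Y. X \<subseteq> Y \<Longrightarrow> Inr -` X \<subseteq> Inr -` Y"
      by (auto simp: R_def)
    show "\<And>X Y. X \<in> R \<Longrightarrow> Y \<in> ?M \<Longrightarrow> X \<subseteq> Y \<Longrightarrow> Y \<in> R"
      by (auto simp: R_def)
    show "finite (Inr -` X)" if "X \<in> R" for X
      using chain[OF that] by (simp add: order_complex_iff)
  next
    fix X assume X: "X \<in> R"
    show "insert (v (Inr -` X)) X \<in> ?M \<and> Inr -` insert (v (Inr -` X)) X = Inr -` X"
      using chain[OF X] below[OF X] least[OF X] by (simp add: v_def subdivision_cylinder_def)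
    assume "v (Inr -` X) \<in> X"
    show "X - {v (Inr -` X)} \<in> R \<and> Inr -` (X - {v (Inr -` X)}) = Inr -` X"
      using X chain[OF X] below[OF X] by (auto simp: v_def R_def subdivision_cylinder_def)
  qed
  moreover have "?M - R = (`) Inl ` K"
  proof
    show "?M - R \<subseteq> (`) Inl ` K"
    proof
      fix X assume "X \<in> ?M - R"
      then have face: "Inl -` X \<in> K" and no_Inr: "Inr -` X = {}"
        by (auto simp: R_def subdivision_cylinder_def order_complex_def)
      have "X = Inl ` (Inl -` X)"
        using Inl_vimage_Un_Inr_vimage[of X] no_Inr by simp
      with face show "X \<in> (`) Inl ` K"
        by (rule rev_image_eqI)
    qed
    show "(`) Inl ` K \<subseteq> ?M - R"
      by (auto simp: R_def subdivision_cylinder_def)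
  qed
  ultimately show ?thesis
    by simp
qed

end

theorem simple_homotopy_equivalent_if_subdivision_collapses:
  assumes K: "simplicial_complex K" and "collapses (order_complex K) L"
  shows "simple_homotopy_equivalent K L"
proof (rule simple_homotopy_equivalent_if_common_collapse
    [where M = "subdivision_cylinder K" and i = Inl and j = Inr])
  show "simplicial_complex (subdivision_cylinder K)"
    using K by (rule simplicial_complex_subdivision_cylinder)
  show "collapses (subdivision_cylinder K) ((`) Inl ` K)"
    using K by (rule subdivision_cylinder_collapses_complex)
  have "collapses ((`) Inr ` order_complex K) ((`) Inr ` L)"
    using assms(2) by (rule collapses_image) simp
  then show "collapses (subdivision_cylinder K) ((`) Inr ` L)"
    using subdivision_cylinder_collapses_order_complex[OF K] by (rule collapses_trans[rotated])
qed simp_all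

locale loop_graph =
  fixes V :: "'a set" and E :: "'a \<Rightarrow> 'a \<Rightarrow> bool"
  assumes finite_graph: "finite_graph V E"
begin

abbreviation N :: "'a set \<Rightarrow> 'a set" where
  "N \<equiv> common_nbhd V E"

abbreviation \<N> :: "'a set set" where
  "\<N> \<equiv> neighborhood_complex V E"

lemma finite_vertices: "finite V"
  using finite_graph by (simp add: finite_graph_def)

lemma common_nbhd_subset: "N S \<subseteq> V"
  by (auto simp: common_nbhd_def)

lemma common_nbhd_antimono: "S \<subseteq> T \<Longrightarrow> N T \<subseteq> N S"
  by (auto simp: common_nbhd_def)

lemma subset_common_nbhd_common_nbhd: "S \<subseteq> V \<Longrightarrow> S \<subseteq> N (N S)"
  using finite_graph by (auto simp: common_nbhd_def finite_graph_def)

lemma common_nbhd_least_closed: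
  assumes "T \<in> \<N>" and "S \<subseteq> N T"
  shows "N (N S) \<subseteq> N T"
proof (rule common_nbhd_antimono)
  show "T \<subseteq> N S"
    using assms subset_common_nbhd_common_nbhd[of T] common_nbhd_antimono[of S "N T"]
    by (auto simp: neighborhood_complex_def)
qed

lemma common_nbhd_in_neighborhood_complex:
  assumes "S \<in> \<N>"
  shows "N S \<in> \<N>"
proof -
  have "S \<subseteq> N (N S)"
    using assms subset_common_nbhd_common_nbhd by (simp add: neighborhood_complex_def)
  then show ?thesis
    using assms common_nbhd_subset by (auto simp: neighborhood_complex_def)
qed

lemma finite_neighborhood_complex: "finite \<N>"
proof (rule finite_subset)
  show "\<N> \<subseteq> Pow V"
    by (auto simp: neighborhood_complex_def)
qed (simp add: finite_vertices)

lemma simplicial_complex_neighborhood_complex: "simplicial_complex \<N>"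
proof (rule simplicial_complexI)
  show "finite \<N>"
    by (rule finite_neighborhood_complex)
  show "finite S \<and> S \<noteq> {}" if "S \<in> \<N>" for S
    using that finite_vertices by (auto simp: neighborhood_complex_def intro: finite_subset)
  show "T \<in> \<N>" if "S \<in> \<N>" "T \<noteq> {}" "T \<subseteq> S" for S T
    using that common_nbhd_antimono[of T S] by (auto simp: neighborhood_complex_def)
qed

definition max_nonclosed :: "'a set set \<Rightarrow> 'a set" where
  "max_nonclosed c = \<Union>{x \<in> c. x \<notin> N ` \<N>}"

lemma max_nonclosed_mono: "c \<subseteq> d \<Longrightarrow> max_nonclosed c \<subseteq> max_nonclosed d"
  by (auto simp: max_nonclosed_def)

lemma max_nonclosed_insert_closed: "z \<in> N ` \<N> \<Longrightarrow> max_nonclosed (insert z c) = max_nonclosed c"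
  by (auto simp: max_nonclosed_def)

lemma max_nonclosed_remove_closed: "z \<in> N ` \<N> \<Longrightarrow> max_nonclosed (c - {z}) = max_nonclosed c"
  by (auto simp: max_nonclosed_def)

lemma max_nonclosed_in_chain:
  assumes "c \<in> order_complex \<N>" and "x \<in> c" and "x \<notin> N ` \<N>"
  shows "max_nonclosed c \<in> c" and "max_nonclosed c \<notin> N ` \<N>"
proof -
  have "subset.chain \<N> {x \<in> c. x \<notin> N ` \<N>}" "finite {x \<in> c. x \<notin> N ` \<N>}"
    using assms(1) by (auto simp: order_complex_iff subset_chain_def)
  then have "max_nonclosed c \<in> {x \<in> c. x \<notin> N ` \<N>}"
    unfolding max_nonclosed_def using assms(2,3) by (intro Union_in_chain) auto
  then show "max_nonclosed c \<in> c" and "max_nonclosed c \<notin> N ` \<N>"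
    by simp_all
qed

lemma insert_closure_max_nonclosed:
  assumes c: "c \<in> order_complex \<N>" and "x \<in> c" and "x \<notin> N ` \<N>"
  shows "insert (N (N (max_nonclosed c))) c \<in> order_complex \<N>"
proof (rule insert_in_order_complex)
  let ?x = "max_nonclosed c"
  have x: "?x \<in> c" "?x \<notin> N ` \<N>"
    using max_nonclosed_in_chain[OF assms] by simp_all
  have chain: "subset.chain \<N> c" and "finite c"
    using c by (simp_all add: order_complex_iff)
  then have "?x \<in> \<N>"
    using x(1) by (auto simp: subset_chain_def)
  then show "N (N ?x) \<in> \<N>"
    by (intro common_nbhd_in_neighborhood_complex)
  have x_closure: "?x \<subseteq> N (N ?x)"
    using \<open>?x \<in> \<N>\<close> subset_common_nbhd_common_nbhd by (simp add: neighborhood_complex_def)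
  show "y \<subseteq> N (N ?x) \<or> N (N ?x) \<subseteq> y" if "y \<in> c" for y
  proof (cases "y \<in> N ` \<N>")
    case True
    then obtain T where "T \<in> \<N>" "y = N T"
      by blast
    moreover have "y \<subseteq> ?x \<or> ?x \<subseteq> y"
      using chain that x(1) by (auto simp: subset_chain_def)
    ultimately show ?thesis
      using x_closure common_nbhd_least_closed by blast
  next
    case False
    then have "y \<subseteq> ?x"
      using that by (auto simp: max_nonclosed_def)
    then show ?thesis
      using x_closure by blast
  qed
qed (use c in \<open>simp_all add: order_complex_iff\<close>)

lemma order_complex_collapses_lovasz_complex: "collapses (order_complex \<N>) (lovasz_complex V E)"
proof -
  define R where "R = {c \<in> order_complex \<N>. \<exists>x \<in> c. x \<notin> N ` \<N>}"
  have max_in_R: "max_nonclosed c \<in> c" "max_nonclosed c \<notin> N ` \<N>" if c: "c \<in> R" for c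
  proof -
    obtain x where "c \<in> order_complex \<N>" "x \<in> c" "x \<notin> N ` \<N>"
      using c by (auto simp: R_def)
    then show "max_nonclosed c \<in> c" "max_nonclosed c \<notin> N ` \<N>"
      by (rule max_nonclosed_in_chain)+
  qed
  have closure_closed: "N (N (max_nonclosed c)) \<in> N ` \<N>" if "c \<in> R" for c
    using that max_in_R(1)[OF that] common_nbhd_in_neighborhood_complex
    by (auto simp: R_def order_complex_def)
  have "collapses (order_complex \<N>) (order_complex \<N> - R)"
  proof (rule collapses_vertex_matching[where key = max_nonclosed and v = "\<lambda>x. N (N x)"])
    show "simplicial_complex (order_complex \<N>)"
      using finite_neighborhood_complex by (rule simplicial_complex_order_complex)
    show "R \<subseteq> order_complex \<N>"
      by (auto simp: R_def)
    show "\<And>c d. c \<in> R \<Longrightarrow> d \<in> order_complex \<N> \<Longrightarrow> c \<subseteq> d \<Longrightarrow> d \<in> R"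
      by (auto simp: R_def)
    show "\<And>c d. c \<subseteq> d \<Longrightarrow> max_nonclosed c \<subseteq> max_nonclosed d"
      by (rule max_nonclosed_mono)
    show "finite (max_nonclosed c)" if "c \<in> R" for c
    proof (rule finite_subset[OF _ finite_vertices])
      show "max_nonclosed c \<subseteq> V"
        using that max_in_R(1)[OF that] by (auto simp: R_def order_complex_def neighborhood_complex_def)
    qed
  next
    fix c assume c: "c \<in> R"
    let ?z = "N (N (max_nonclosed c))"
    show "insert ?z c \<in> order_complex \<N> \<and> max_nonclosed (insert ?z c) = max_nonclosed c"
      using c insert_closure_max_nonclosed max_nonclosed_insert_closed[OF closure_closed[OF c]]
      by (auto simp: R_def)
    have max_in: "max_nonclosed c \<in> c - {?z}"
      using max_in_R[OF c] closure_closed[OF c] by auto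
    then have "c - {?z} \<in> order_complex \<N>"
      using c by (auto simp: R_def order_complex_iff subset_chain_def)
    then show "c - {?z} \<in> R \<and> max_nonclosed (c - {?z}) = max_nonclosed c"
      using max_in max_in_R(2)[OF c] max_nonclosed_remove_closed[OF closure_closed[OF c]]
      unfolding R_def by blast
  qed
  moreover have "order_complex \<N> - R = lovasz_complex V E"
    using common_nbhd_in_neighborhood_complex
    by (auto simp: R_def lovasz_complex_def face_poset_def order_complex_def)
  ultimately show ?thesis
    by simp
qed

end

theorem mainTheorem1:
  fixes V :: "'a set" and E :: "'a \<Rightarrow> 'a \<Rightarrow> bool"
  assumes "finite_graph V E"
  shows "collapses (barycentric_subdivision (neighborhood_complex V E)) (lovasz_complex V E)
     \<and> simple_homotopy_equivalent (neighborhood_complex V E) (lovasz_complex V E)"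
proof -
  interpret loop_graph V E
    using assms by unfold_locales
  have "collapses (order_complex \<N>) (lovasz_complex V E)"
    by (rule order_complex_collapses_lovasz_complex)
  then show ?thesis
    using simple_homotopy_equivalent_if_subdivision_collapses[OF simplicial_complex_neighborhood_complex]
    by (simp add: barycentric_subdivision_eq)
qed

end
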